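(* Let $\gamma\in\mathbb{C}$ with $\Re\gamma>0$, $\Im\gamma<0$, and let $\nu,M$ be real numbers with $0<\nu<1/2$ and $M>0$. Let \[ Z:=\{z:-1+\nu\le\Re z\le2-\nu,\ |\Im z|\le M\}\setminus(\square^-_\nu\cup\square^+_\nu), \] where $\square^-_\nu:=\{z:-1+\nu\le\Re z\le\nu,\ |\Im z|\le\nu\}$ and $\square^+_\nu:=\{z:1-\nu\le\Re z\le2-\nu,\ |\Im z|\le\nu\}$. Then there is a constant $c>0$ independent of $z$ such that for all sufficiently large $N$ and all $z\in Z$, \[ \left|\frac{N}{2\pi i\gamma}\mathcal{L}_2\left(z-\frac{\gamma}{2N}\right)-\frac{N}{2\pi i\gamma}\mathcal{L}_2\left(z+\frac{\gamma}{2N}\right)-\mathcal{L}_1(z)\right|<\frac{c}{N^2}. \]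
   Context: On $\mathbb{C}\setminus((-\infty,0]\cup[1,\infty))$: $\mathcal{L}_1(z):=\log(1-e^{2\pi iz})$ if $\Im z\ge0$, $\mathcal{L}_1(z):=\pi i(2z-1)+\log(1-e^{-2\pi iz})$ if $\Im z<0$; $\mathcal{L}_2(z):=\mathrm{Li}_2(e^{2\pi iz})$ if $\Im z\ge0$, $\mathcal{L}_2(z):=\pi^2(2z^2-2z+\frac13)-\mathrm{Li}_2(e^{-2\pi iz})$ if $\Im z<0$. $\log$ has cut $(-\infty,0]$; $\mathrm{Li}_2(z)=-\int_0^z\frac{\log(1-x)}{x}dx$ has cut $[1,\infty)$. *)

theory Defs
  imports "HOL-Complex_Analysis.Complex_Analysis"
begin

text \<open>Dilogarithm Li_2(z) = - integral_0^z log(1-x)/x dx, taken along the straight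
segment from 0 to z (principal branch, cut [1,\<infinity>)). The integrand has a removable
singularity at 0 with value -1 there.\<close>

definition dilog_integrand :: "complex \<Rightarrow> complex" where
  "dilog_integrand x = (if x = 0 then -1 else Ln (1 - x) / x)"

definition Li2 :: "complex \<Rightarrow> complex" where
  "Li2 z = - contour_integral (linepath 0 z) dilog_integrand"

definition calL1 :: "complex \<Rightarrow> complex" where
  "calL1 (z::complex) = (if Im z \<ge> 0 then Ln (1 - exp (2 * pi * \<i> * z))
              else pi * \<i> * (2 * z - 1) + Ln (1 - exp (- 2 * pi * \<i> * z)))"

definition calL2 :: "complex \<Rightarrow> complex" where
  "calL2 (z::complex) = (if Im z \<ge> 0 then Li2 (exp (2 * pi * \<i> * z))
              else (of_real pi)\<^sup>2 * (2 * z\<^sup>2 - 2 * z + 1/3) - Li2 (exp (- 2 * pi * \<i> * z)))"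

definition box_minus :: "real \<Rightarrow> complex set" where
  "box_minus \<nu> = {z. -1 + \<nu> \<le> Re z \<and> Re z \<le> \<nu> \<and> \<bar>Im z\<bar> \<le> \<nu>}"

definition box_plus :: "real \<Rightarrow> complex set" where
  "box_plus \<nu> = {z. 1 - \<nu> \<le> Re z \<and> Re z \<le> 2 - \<nu> \<and> \<bar>Im z\<bar> \<le> \<nu>}"

definition regionZ :: "real \<Rightarrow> real \<Rightarrow> complex set" where
  "regionZ \<nu> M = {z. -1 + \<nu> \<le> Re z \<and> Re z \<le> 2 - \<nu> \<and> \<bar>Im z\<bar> \<le> M}
                   - (box_minus \<nu> \<union> box_plus \<nu>)"

end

theory Submission
  imports Defs
begin

(* On the strip 0 < Re z < 1 the two branches in the definition of calL2 agree: the reflection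
   formula Li2(e(z)) + Li2(e(-z)) = pi^2 (2z^2 - 2z + 1/3), with e(z) = exp(2 pi i z), holds there
   because the derivative of the difference vanishes and at z = 1/2 both sides equal -pi^2/6,
   as Li2(-1) = -pi^2/12. Hence calL2 is holomorphic outside the two boxes, with derivative
   -2 pi i calL1. With h = gamma/(2N), the quantity to be estimated is -N/(2 pi i gamma) times
   the central-difference error calL2(z+h) - calL2(z-h) - 2h calL2'(z), which Taylor's theorem
   bounds by |h|^3 times the supremum of the third derivative of calL2 on the disc of radius
   nu/2 around z; this supremum is uniform in z because the closed nu/2-neighbourhood of Z is a
   compact subset of the domain of holomorphy. *)

definition slit_plane :: "complex set" where
  "slit_plane = {w. Im w \<noteq> 0 \<or> Re w < 1}"

lemma open_slit_plane: "open slit_plane"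
proof -
  have "slit_plane = {w. Im w < 0} \<union> {w. Im w > 0} \<union> {w. Re w < 1}"
    unfolding slit_plane_def by auto
  then show ?thesis
    by (metis open_Un open_halfspace_Im_lt open_halfspace_Im_gt open_halfspace_Re_lt)
qed

lemma one_minus_slit_plane_notin_nonpos_Reals: "w \<in> slit_plane \<Longrightarrow> 1 - w \<notin> \<real>\<^sub>\<le>\<^sub>0"
  unfolding slit_plane_def by (auto simp: complex_nonpos_Reals_iff)

lemma ball_subset_slit_plane: "ball 0 1 \<subseteq> slit_plane"
  using complex_Re_le_cmod by (force simp: slit_plane_def intro: le_less_trans)

lemma segment_subset_slit_plane:
  assumes "w \<in> slit_plane"
  shows "closed_segment 0 w \<subseteq> slit_plane"
proof
  fix u assume "u \<in> closed_segment 0 w"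
  then obtain t where t: "0 \<le> t" "t \<le> 1" and u: "u = t *\<^sub>R w"
    by (auto simp: closed_segment_def)
  show "u \<in> slit_plane"
  proof (cases "Im w = 0 \<or> t = 0")
    case True
    with assms have "Re w < 1 \<or> t = 0" by (auto simp: slit_plane_def)
    then have "t * Re w < 1"
      using t by (cases "Re w \<le> 0")
        (auto intro: le_less_trans[OF mult_nonneg_nonpos] le_less_trans[OF mult_left_le_one_le])
    then show ?thesis by (simp add: u slit_plane_def)
  next
    case False
    then show ?thesis by (simp add: u slit_plane_def)
  qed
qed

lemma isCont_dilog_integrand_0: "isCont dilog_integrand 0"
proof -
  have "((\<lambda>w. Ln (1 - w)) has_field_derivative -1) (at 0)"
    by (auto intro!: derivative_eq_intros)
  then have "((\<lambda>w. Ln (1 - w) / w) \<longlongrightarrow> -1) (at 0)"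
    by (simp add: DERIV_def)
  then have "(dilog_integrand \<longlongrightarrow> -1) (at 0)"
    by (rule Lim_transform_eventually) (auto simp: dilog_integrand_def eventually_at_filter)
  then show ?thesis by (simp add: isCont_def dilog_integrand_def)
qed

lemma holomorphic_on_dilog_integrand: "dilog_integrand holomorphic_on slit_plane - {0}"
proof -
  have "(\<lambda>w. Ln (1 - w) / w) holomorphic_on slit_plane - {0}"
    using one_minus_slit_plane_notin_nonpos_Reals by (intro holomorphic_intros) auto
  then show ?thesis
    by (rule holomorphic_transform) (simp add: dilog_integrand_def)
qed

lemma dilog_integrand_field_differentiable:
  "w \<in> slit_plane \<Longrightarrow> w \<noteq> 0 \<Longrightarrow> dilog_integrand field_differentiable at w"
  using holomorphic_on_dilog_integrand open_slit_plane
  by (auto intro: holomorphic_on_imp_differentiable_at)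

lemma continuous_on_dilog_integrand: "continuous_on slit_plane dilog_integrand"
  using isCont_dilog_integrand_0 dilog_integrand_field_differentiable
    field_differentiable_imp_continuous_at
  by (metis continuous_at_imp_continuous_on)

lemma has_field_derivative_Li2:
  assumes "x \<in> slit_plane"
  shows "(Li2 has_field_derivative - dilog_integrand x) (at x)"
proof -
  have zero_in: "0 \<in> slit_plane" by (simp add: slit_plane_def)
  have triangle: "contour_integral (linepath 0 b) dilog_integrand
      + contour_integral (linepath b c) dilog_integrand
      + contour_integral (linepath c 0) dilog_integrand = 0"
    if "closed_segment b c \<subseteq> slit_plane" for b c
  proof -
    have hull: "convex hull {0, b, c} \<subseteq> slit_plane"
      using that zero_in segment_subset_slit_plane by (simp add: starlike_convex_subset)
    have "(dilog_integrand has_contour_integral 0) (linepath 0 b +++ linepath b c +++ linepath c 0)"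
    proof (rule Cauchy_theorem_triangle_cofinite[where S="{0}"])
      show "continuous_on (convex hull {0, b, c}) dilog_integrand"
        using hull continuous_on_dilog_integrand by (rule continuous_on_subset[rotated])
      show "dilog_integrand field_differentiable at y"
        if "y \<in> interior (convex hull {0, b, c}) - {0}" for y
        using that hull interior_subset by (blast intro: dilog_integrand_field_differentiable)
    qed simp
    then show ?thesis by (rule has_chain_integral_chain_integral3)
  qed
  have "((\<lambda>x. contour_integral (linepath 0 x) dilog_integrand)
          has_field_derivative dilog_integrand x) (at x)"
    by (rule triangle_contour_integrals_starlike_primitive[OF continuous_on_dilog_integrand zero_in
          open_slit_plane assms segment_subset_slit_plane triangle])
  then show ?thesis
    unfolding Li2_def[abs_def] by (rule DERIV_minus)
qed

(* The n = 0 term vanishes, as x^0 / 0 = 0. *)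
definition dilog_series :: "complex \<Rightarrow> complex" where
  "dilog_series x = (\<Sum>n. x ^ n / (of_nat n)\<^sup>2)"

lemma inverse_squares_sums': "(\<lambda>n. 1 / (real n)\<^sup>2) sums (pi\<^sup>2 / 6)"
  using inverse_squares_sums sums_Suc_iff[of "\<lambda>n. 1 / (real n)\<^sup>2"] by (simp add: add.commute)

lemma alternating_inverse_squares_sums: "(\<lambda>n. (-1) ^ n / (real n)\<^sup>2) sums (- pi\<^sup>2 / 12)"
proof -
  define e where "e n = (if even n then 1 / (real n)\<^sup>2 else 0)" for n
  have "(\<lambda>m. e (2 * m)) sums (pi\<^sup>2 / 6 / 4)"
    using sums_divide[OF inverse_squares_sums', of 4] by (simp add: e_def mult.commute)
  then have "e sums (pi\<^sup>2 / 24)"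
    by (subst sums_mono_reindex[symmetric, where g="\<lambda>m. 2 * m"])
       (auto simp: e_def strict_mono_def elim!: oddE)
  then have "(\<lambda>n. 2 * e n - 1 / (real n)\<^sup>2) sums (2 * (pi\<^sup>2 / 24) - pi\<^sup>2 / 6)"
    by (intro sums_diff sums_mult inverse_squares_sums')
  moreover have "(\<lambda>n. 2 * e n - 1 / (real n)\<^sup>2) = (\<lambda>n. (-1) ^ n / (real n)\<^sup>2)"
    by (auto simp: e_def)
  ultimately show ?thesis by simp
qed

lemma summable_inverse_squares_complex: "summable (\<lambda>n. 1 / (of_nat n)\<^sup>2 :: complex)"
proof -
  have "summable (\<lambda>n. complex_of_real (1 / (real n)\<^sup>2))"
    using summable_complex_of_real[THEN iffD2, OF sums_summable[OF inverse_squares_sums']] .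
  then show ?thesis by simp
qed

lemma has_field_derivative_dilog_series:
  assumes "norm x < 1"
  shows "(dilog_series has_field_derivative (\<Sum>n. x ^ n / of_nat (Suc n))) (at x)"
proof -
  define c :: "nat \<Rightarrow> complex" where "c n = 1 / (of_nat n)\<^sup>2" for n
  have "dilog_series = (\<lambda>x. \<Sum>n. c n * x ^ n)"
    by (simp add: dilog_series_def[abs_def] c_def)
  moreover have "(\<lambda>n. x ^ n / of_nat (Suc n)) = (\<lambda>n. diffs c n * x ^ n)"
    by (simp add: diffs_def c_def power2_eq_square field_simps del: of_nat_Suc)
  moreover have "DERIV (\<lambda>x. \<Sum>n. c n * x ^ n) x :> (\<Sum>n. diffs c n * x ^ n)"
    using summable_inverse_squares_complex assms
    by (intro termdiffs_strong[where K=1]) (simp_all add: c_def)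
  ultimately show ?thesis by simp
qed

lemma dilog_integrand_sums:
  assumes "norm x < 1"
  shows "(\<lambda>n. x ^ n / of_nat (Suc n)) sums (- dilog_integrand x)"
proof (cases "x = 0")
  case True
  then show ?thesis
    using powser_sums_zero[of "\<lambda>n. 1 / of_nat (Suc n) :: complex"]
    by (simp add: dilog_integrand_def)
next
  case False
  have "(\<lambda>n. - (x ^ n) / of_nat n) sums Ln (1 - x)"
    using Ln_series'[of "-x"] assms by simp
  then have "(\<lambda>n. - (x ^ Suc n) / of_nat (Suc n)) sums Ln (1 - x)"
    by (subst sums_Suc_iff) simp
  then have "(\<lambda>n. - (x ^ Suc n) / of_nat (Suc n) / (- x)) sums (Ln (1 - x) / (- x))"
    by (rule sums_divide)
  then show ?thesis
    using False by (simp add: dilog_integrand_def del: of_nat_Suc)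
qed

lemma Li2_eq_dilog_series_ball:
  assumes "norm x < 1"
  shows "Li2 x = dilog_series x"
proof -
  have "\<exists>c. \<forall>y\<in>ball 0 1. Li2 y - dilog_series y = c"
  proof (rule has_field_derivative_zero_constant)
    fix y :: complex assume "y \<in> ball 0 1"
    then have "norm y < 1" "y \<in> slit_plane" using ball_subset_slit_plane by auto
    then have "((\<lambda>y. Li2 y - dilog_series y) has_field_derivative 0) (at y)"
      using DERIV_diff[OF has_field_derivative_Li2 has_field_derivative_dilog_series]
        sums_unique[OF dilog_integrand_sums] by fastforce
    then show "((\<lambda>y. Li2 y - dilog_series y) has_field_derivative 0) (at y within ball 0 1)"
      by (rule has_field_derivative_at_within)
  qed simp
  then obtain c where c: "\<And>y. y \<in> ball 0 1 \<Longrightarrow> Li2 y - dilog_series y = c"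
    by blast
  have "Li2 0 = 0" by (simp add: Li2_def)
  moreover have "dilog_series 0 = 0"
  proof -
    have "(\<lambda>n. 0 ^ n / (of_nat n)\<^sup>2 :: complex) = (\<lambda>_. 0)"
      by (auto simp: power_0_left)
    then show ?thesis by (simp add: dilog_series_def)
  qed
  ultimately show ?thesis
    using c[of 0] c[of x] assms by simp
qed

lemma continuous_on_dilog_series: "continuous_on (cball 0 1) dilog_series"
proof -
  have "uniform_limit (cball 0 1) (\<lambda>n x. \<Sum>i<n. x ^ i / (of_nat i)\<^sup>2) dilog_series sequentially"
    unfolding dilog_series_def[abs_def]
  proof (rule Weierstrass_m_test)
    show "norm (x ^ i / (of_nat i)\<^sup>2) \<le> 1 / (real i)\<^sup>2" if "x \<in> cball 0 1" for x :: complex and i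
      using that by (simp add: norm_divide norm_power divide_right_mono power_le_one)
  qed (use inverse_squares_sums' in \<open>auto dest: sums_summable\<close>)
  then show ?thesis
    by (rule uniform_limit_theorem[rotated])
       (auto simp: divide_inverse intro!: always_eventually continuous_intros)
qed

lemma Li2_eq_dilog_series:
  assumes "x \<in> slit_plane" "norm x \<le> 1"
  shows "Li2 x = dilog_series x"
proof -
  have "isCont Li2 x"
    using has_field_derivative_Li2[OF assms(1)] by (rule DERIV_isCont)
  then have Li2_lim: "(Li2 \<longlongrightarrow> Li2 x) (at x within ball 0 1)"
    by (simp add: isCont_def tendsto_within_subset[OF _ subset_UNIV])
  have "(dilog_series \<longlongrightarrow> dilog_series x) (at x within cball 0 1)"
    using continuous_on_dilog_series assms(2) by (simp add: continuous_on_def)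
  then have "(dilog_series \<longlongrightarrow> dilog_series x) (at x within ball 0 1)"
    by (rule tendsto_within_subset) auto
  then have series_lim: "(Li2 \<longlongrightarrow> dilog_series x) (at x within ball 0 1)"
    by (rule Lim_transform_within[where d=1]) (auto simp: Li2_eq_dilog_series_ball)
  have "x islimpt ball 0 1"
    using assms(2) by (simp add: islimpt_ball)
  then have "at x within ball 0 1 \<noteq> bot"
    by (simp add: trivial_limit_within)
  then show ?thesis
    using Li2_lim series_lim by (rule tendsto_unique)
qed

lemma Li2_minus_one: "Li2 (-1) = - of_real (pi\<^sup>2 / 12)"
proof -
  have "(\<lambda>n. complex_of_real ((-1) ^ n / (real n)\<^sup>2)) = (\<lambda>n. (-1) ^ n / (of_nat n)\<^sup>2)"
    by simp
  then have "(\<lambda>n. (-1) ^ n / (of_nat n)\<^sup>2) sums (of_real (- pi\<^sup>2 / 12) :: complex)"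
    using sums_of_real[OF alternating_inverse_squares_sums] by metis
  then show ?thesis
    by (simp add: Li2_eq_dilog_series slit_plane_def dilog_series_def sums_iff)
qed

lemma exp_2pi_i_in_slit_plane:
  assumes "Im z > 0 \<or> Re z \<notin> \<int>"
  shows "exp (2 * pi * \<i> * z) \<in> slit_plane"
proof (rule ccontr)
  define w where "w = exp (2 * pi * \<i> * z)"
  define r where "r = exp (- 2 * pi * Im z)"
  have "w = exp (of_real (- 2 * pi * Im z) + 2 * pi * \<i> * Re z)"
    unfolding w_def by (rule arg_cong[where f=exp]) (simp add: complex_eq_iff)
  also have "\<dots> = of_real r * exp (2 * pi * \<i> * Re z)"
    by (simp only: exp_add exp_of_real r_def)
  finally have polar: "w = of_real r * exp (2 * pi * \<i> * Re z)" .
  have norm_w: "norm w = r"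
    by (simp add: polar norm_mult r_def)
  assume "exp (2 * pi * \<i> * z) \<notin> slit_plane"
  then have "Im w = 0" "Re w \<ge> 1"
    by (auto simp: w_def slit_plane_def)
  then have "w = of_real r" "r \<ge> 1"
    using norm_w by (auto simp: complex_eq_iff cmod_eq_Re)
  then have unit: "exp (2 * pi * \<i> * Re z) = 1" and "Im z \<le> 0"
    using polar pi_gt_zero by (auto simp: r_def mult_le_0_iff)
  from unit obtain n :: int where "2 * pi * Re z = of_int (2 * n) * pi"
    by (auto simp: exp_eq_1)
  then have "Re z \<in> \<int>"
    by (simp add: Ints_def)
  with \<open>Im z \<le> 0\<close> assms show False
    by simp
qed

lemma exp_minus_2pi_i_in_slit_plane:
  "Im z < 0 \<or> Re z \<notin> \<int> \<Longrightarrow> exp (- 2 * pi * \<i> * z) \<in> slit_plane"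
  using exp_2pi_i_in_slit_plane[of "- z"] by (simp add: minus_in_Ints_iff)

lemma has_field_derivative_Li2_exp:
  assumes "exp (c * z) \<in> slit_plane"
  shows "((\<lambda>z. Li2 (exp (c * z))) has_field_derivative - c * Ln (1 - exp (c * z))) (at z)"
proof -
  have "((\<lambda>z. Li2 (exp (c * z))) has_field_derivative
          - dilog_integrand (exp (c * z)) * (c * exp (c * z))) (at z)"
    by (rule DERIV_chain2[where g="\<lambda>z. exp (c * z)", OF has_field_derivative_Li2[OF assms]])
       (auto intro!: derivative_eq_intros)
  then show ?thesis
    by (simp add: dilog_integrand_def mult.commute)
qed

lemma has_field_derivative_Ln_one_minus_exp:
  assumes "exp (c * z) \<in> slit_plane"
  shows "((\<lambda>z. Ln (1 - exp (c * z))) has_field_derivative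
           - c * exp (c * z) / (1 - exp (c * z))) (at z)"
  using one_minus_slit_plane_notin_nonpos_Reals[OF assms]
  by (auto intro!: derivative_eq_intros simp: field_simps)

definition strip :: "complex set" where
  "strip = {z. 0 < Re z \<and> Re z < 1}"

lemma open_strip: "open strip" and convex_strip: "convex strip"
proof -
  have strip: "strip = {z. Re z > 0} \<inter> {z. Re z < 1}"
    by (auto simp: strip_def)
  show "open strip"
    unfolding strip by (intro open_Int open_halfspace_Re_gt open_halfspace_Re_lt)
  show "convex strip"
    unfolding strip by (intro convex_Int convex_halfspace_Re_gt convex_halfspace_Re_lt)
qed

lemma Re_strip_notin_Ints: "z \<in> strip \<Longrightarrow> Re z \<notin> \<int>"
  by (auto simp: strip_def elim!: Ints_cases)

lemma vanishes_on_strip: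
  assumes "\<And>x. x \<in> strip \<Longrightarrow> (f has_field_derivative 0) (at x)"
    and "f (1 / 2) = 0" and "z \<in> strip"
  shows "f z = 0"
proof -
  have "f constant_on strip"
    using assms(1) convex_connected[OF convex_strip] open_strip
    by (rule has_field_derivative_0_imp_constant_on)
  moreover have "1 / 2 \<in> strip"
    by (simp add: strip_def)
  ultimately show ?thesis
    using assms(2,3) by (metis constant_on_def)
qed

lemma exp_2pi_i_half: "exp (2 * pi * \<i> * (1 / 2)) = -1" "exp (- 2 * pi * \<i> * (1 / 2)) = -1"
  by (simp_all add: exp_minus mult.commute)

lemma Ln_one_minus_exp_reflection:
  assumes "z \<in> strip"
  shows "Ln (1 - exp (2 * pi * \<i> * z)) - Ln (1 - exp (- 2 * pi * \<i> * z)) = \<i> * pi * (2 * z - 1)"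
proof -
  have "(\<lambda>z. Ln (1 - exp (2 * pi * \<i> * z)) - Ln (1 - exp (- 2 * pi * \<i> * z))
          - \<i> * pi * (2 * z - 1)) z = 0"
  proof (rule vanishes_on_strip[OF _ _ assms])
    fix x assume x: "x \<in> strip"
    define w where "w = exp (2 * pi * \<i> * x)"
    have "w \<noteq> 0"
      by (simp add: w_def)
    have "1 - w \<noteq> 0"
      using exp_2pi_i_in_slit_plane[of x] x by (auto simp: w_def slit_plane_def Re_strip_notin_Ints)
    have d1: "((\<lambda>z. Ln (1 - exp (2 * pi * \<i> * z))) has_field_derivative
        - (2 * pi * \<i>) * w / (1 - w)) (at x)"
      unfolding w_def
      by (rule has_field_derivative_Ln_one_minus_exp)
         (use x Re_strip_notin_Ints exp_2pi_i_in_slit_plane in auto)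
    have d2: "((\<lambda>z. Ln (1 - exp (- 2 * pi * \<i> * z))) has_field_derivative
        - 2 * pi * \<i> / (1 - w)) (at x)"
    proof -
      have inv: "exp (- 2 * pi * \<i> * x) = inverse w"
        by (simp add: w_def flip: exp_minus)
      have "- (- 2 * pi * \<i>) * inverse w / (1 - inverse w) = - 2 * pi * \<i> / (1 - w)"
        using \<open>w \<noteq> 0\<close> \<open>1 - w \<noteq> 0\<close> by (simp add: field_simps)
      moreover have "((\<lambda>z. Ln (1 - exp (- 2 * pi * \<i> * z))) has_field_derivative
          - (- 2 * pi * \<i>) * exp (- 2 * pi * \<i> * x) / (1 - exp (- 2 * pi * \<i> * x))) (at x)"
        by (rule has_field_derivative_Ln_one_minus_exp)
           (use x Re_strip_notin_Ints exp_minus_2pi_i_in_slit_plane in auto)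
      ultimately show ?thesis by (simp only: inv)
    qed
    have d3: "((\<lambda>z. \<i> * pi * (2 * z - 1)) has_field_derivative \<i> * pi * 2) (at x)"
      by (auto intro!: derivative_eq_intros)
    have "- (2 * pi * \<i>) * w / (1 - w) - (- 2 * pi * \<i> / (1 - w)) - \<i> * pi * 2 = 0"
      using \<open>1 - w \<noteq> 0\<close> by (simp add: divide_simps) (simp add: algebra_simps)
    with DERIV_diff[OF DERIV_diff[OF d1 d2] d3]
    show "((\<lambda>z. Ln (1 - exp (2 * pi * \<i> * z)) - Ln (1 - exp (- 2 * pi * \<i> * z))
                - \<i> * pi * (2 * z - 1)) has_field_derivative 0) (at x)"
      by simp
  qed (simp only: exp_2pi_i_half, simp)
  then show ?thesis by simp
qed

lemma Li2_exp_reflection: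
  assumes "z \<in> strip"
  shows "Li2 (exp (2 * pi * \<i> * z)) + Li2 (exp (- 2 * pi * \<i> * z))
           = (of_real pi)\<^sup>2 * (2 * z\<^sup>2 - 2 * z + 1/3)"
proof -
  have "(\<lambda>z. Li2 (exp (2 * pi * \<i> * z)) + Li2 (exp (- 2 * pi * \<i> * z))
          - (of_real pi)\<^sup>2 * (2 * z\<^sup>2 - 2 * z + 1/3)) z = 0"
  proof (rule vanishes_on_strip[OF _ _ assms])
    fix x assume x: "x \<in> strip"
    have d1: "((\<lambda>z. Li2 (exp (2 * pi * \<i> * z))) has_field_derivative
        - (2 * pi * \<i>) * Ln (1 - exp (2 * pi * \<i> * x))) (at x)"
      by (rule has_field_derivative_Li2_exp)
         (use x Re_strip_notin_Ints exp_2pi_i_in_slit_plane in auto)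
    have d2: "((\<lambda>z. Li2 (exp (- 2 * pi * \<i> * z))) has_field_derivative
        - (- 2 * pi * \<i>) * Ln (1 - exp (- 2 * pi * \<i> * x))) (at x)"
      by (rule has_field_derivative_Li2_exp)
         (use x Re_strip_notin_Ints exp_minus_2pi_i_in_slit_plane in auto)
    have d3: "((\<lambda>z. (of_real pi)\<^sup>2 * (2 * z\<^sup>2 - 2 * z + 1/3)) has_field_derivative
        (of_real pi)\<^sup>2 * (4 * x - 2)) (at x)"
      by (auto intro!: derivative_eq_intros simp: algebra_simps)
    have "- (2 * pi * \<i>) * Ln (1 - exp (2 * pi * \<i> * x))
        + - (- 2 * pi * \<i>) * Ln (1 - exp (- 2 * pi * \<i> * x)) - (of_real pi)\<^sup>2 * (4 * x - 2)
        = - (2 * pi * \<i>) * (Ln (1 - exp (2 * pi * \<i> * x)) - Ln (1 - exp (- 2 * pi * \<i> * x))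
                              - \<i> * pi * (2 * x - 1))"
      by (simp add: algebra_simps power2_eq_square)
    also have "\<dots> = 0"
      by (simp only: Ln_one_minus_exp_reflection[OF x]) simp
    finally show "((\<lambda>z. Li2 (exp (2 * pi * \<i> * z)) + Li2 (exp (- 2 * pi * \<i> * z))
          - (of_real pi)\<^sup>2 * (2 * z\<^sup>2 - 2 * z + 1/3)) has_field_derivative 0) (at x)"
      using DERIV_diff[OF DERIV_add[OF d1 d2] d3] by simp
  next
    show "(\<lambda>z. Li2 (exp (2 * pi * \<i> * z)) + Li2 (exp (- 2 * pi * \<i> * z))
          - (of_real pi)\<^sup>2 * (2 * z\<^sup>2 - 2 * z + 1/3)) (1 / 2) = 0"
      by (simp only: exp_2pi_i_half Li2_minus_one) (simp add: power2_eq_square field_simps)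
  qed
  then show ?thesis by simp
qed

lemma calL1_eq_Ln:
  assumes "Im z > 0 \<or> z \<in> strip"
  shows "calL1 z = Ln (1 - exp (2 * pi * \<i> * z))"
  using assms Ln_one_minus_exp_reflection[of z] by (auto simp: calL1_def algebra_simps)

lemma calL2_eq_Li2:
  assumes "Im z > 0 \<or> z \<in> strip"
  shows "calL2 z = Li2 (exp (2 * pi * \<i> * z))"
  using assms Li2_exp_reflection[of z] by (auto simp: calL2_def algebra_simps)

definition calL_domain :: "complex set" where
  "calL_domain = {z. Im z > 0} \<union> strip \<union> {z. Im z < 0}"

lemma open_calL_domain: "open calL_domain"
  unfolding calL_domain_def by (intro open_Un open_halfspace_Im_gt open_halfspace_Im_lt open_strip)

lemma has_field_derivative_calL2:
  assumes "z \<in> calL_domain"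
  shows "(calL2 has_field_derivative - 2 * pi * \<i> * calL1 z) (at z)"
proof (cases "Im z > 0 \<or> z \<in> strip")
  case True
  have "((\<lambda>z. Li2 (exp (2 * pi * \<i> * z))) has_field_derivative
          - (2 * pi * \<i>) * Ln (1 - exp (2 * pi * \<i> * z))) (at z)"
    by (rule has_field_derivative_Li2_exp)
       (use True Re_strip_notin_Ints exp_2pi_i_in_slit_plane in auto)
  then have "(calL2 has_field_derivative - (2 * pi * \<i>) * Ln (1 - exp (2 * pi * \<i> * z))) (at z)"
    by (rule has_field_derivative_transform_within_open[where S="{z. Im z > 0} \<union> strip"])
       (use True in \<open>auto intro: open_Un open_halfspace_Im_gt open_strip simp: calL2_eq_Li2\<close>)
  then show ?thesis
    using True by (simp add: calL1_eq_Ln)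
next
  case False
  then have "Im z < 0"
    using assms by (auto simp: calL_domain_def)
  have "((\<lambda>z. (of_real pi)\<^sup>2 * (2 * z\<^sup>2 - 2 * z + 1/3)) has_field_derivative
      (of_real pi)\<^sup>2 * (4 * z - 2)) (at z)"
    by (auto intro!: derivative_eq_intros simp: algebra_simps)
  moreover have "((\<lambda>z. Li2 (exp (- 2 * pi * \<i> * z))) has_field_derivative
      - (- 2 * pi * \<i>) * Ln (1 - exp (- 2 * pi * \<i> * z))) (at z)"
    by (rule has_field_derivative_Li2_exp) (use \<open>Im z < 0\<close> exp_minus_2pi_i_in_slit_plane in auto)
  ultimately have "(calL2 has_field_derivative
      (of_real pi)\<^sup>2 * (4 * z - 2) - - (- 2 * pi * \<i>) * Ln (1 - exp (- 2 * pi * \<i> * z))) (at z)"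
    by (rule has_field_derivative_transform_within_open[OF DERIV_diff, where S="{z. Im z < 0}"])
       (use \<open>Im z < 0\<close> in \<open>auto simp: open_halfspace_Im_lt calL2_def\<close>)
  then show ?thesis
    using \<open>Im z < 0\<close> by (simp add: calL1_def algebra_simps power2_eq_square)
qed

lemma holomorphic_on_calL2: "calL2 holomorphic_on calL_domain"
  using has_field_derivative_calL2 open_calL_domain holomorphic_on_open field_differentiable_def
  by blast

lemma deriv_calL2: "z \<in> calL_domain \<Longrightarrow> deriv calL2 z = - 2 * pi * \<i> * calL1 z"
  using has_field_derivative_calL2 DERIV_imp_deriv by blast

lemma central_difference_bound:
  fixes F :: "complex \<Rightarrow> complex"
  assumes holo: "F holomorphic_on W" and "open W" and "convex S" and "S \<subseteq> W"
    and bound: "\<And>x. x \<in> S \<Longrightarrow> norm ((deriv ^^ 3) F x) \<le> B"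
    and plus: "z + h \<in> S" and minus: "z - h \<in> S"
  shows "norm (F (z + h) - F (z - h) - 2 * h * deriv F z) \<le> B * norm h ^ 3"
proof -
  have "z = (1/2) *\<^sub>R (z + h) + (1/2) *\<^sub>R (z - h)"
    by (simp add: complex_eq_iff field_simps)
  then have z: "z \<in> S"
    using convexD[OF \<open>convex S\<close> plus minus, of "1/2" "1/2"] by simp
  have taylor: "norm (F (z + u) - (F z + deriv F z * u + (deriv ^^ 2) F z * u\<^sup>2 / 2))
      \<le> B * norm u ^ 3 / 2" if "z + u \<in> S" for u
  proof -
    have "norm ((deriv ^^ 0) F (z + u) - (\<Sum>i\<le>2. (deriv ^^ i) F z * (z + u - z) ^ i / fact i))
        \<le> B * norm (z + u - z) ^ Suc 2 / fact 2"
    proof (rule complex_Taylor[OF \<open>convex S\<close> _ _ z that])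
      fix i :: nat and x assume "x \<in> S"
      have "(deriv ^^ i) F holomorphic_on W"
        using holo \<open>open W\<close> by (rule holomorphic_higher_deriv)
      then have "((deriv ^^ i) F has_field_derivative deriv ((deriv ^^ i) F) x) (at x within S)"
        by (rule holomorphic_derivI) (use \<open>x \<in> S\<close> \<open>S \<subseteq> W\<close> \<open>open W\<close> in auto)
      then show "((deriv ^^ i) F has_field_derivative (deriv ^^ Suc i) F x) (at x within S)"
        by simp
    qed (use bound in \<open>simp add: numeral_3_eq_3\<close>)
    then show ?thesis
      by (simp add: numeral_2_eq_2 numeral_3_eq_3 atMost_Suc ac_simps)
  qed
  have "F (z + h) - F (z - h) - 2 * h * deriv F z
      = (F (z + h) - (F z + deriv F z * h + (deriv ^^ 2) F z * h\<^sup>2 / 2))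
        - (F (z + - h) - (F z + deriv F z * - h + (deriv ^^ 2) F z * (- h)\<^sup>2 / 2))"
    by (simp add: algebra_simps)
  also have "norm \<dots> \<le> B * norm h ^ 3 / 2 + B * norm (- h) ^ 3 / 2"
    by (rule order.trans[OF norm_triangle_ineq4 add_mono])
       (use taylor[of h] taylor[of "- h"] plus minus in auto)
  finally show ?thesis by simp
qed

lemma holomorphic_higher_deriv_bounded_near:
  fixes F :: "complex \<Rightarrow> complex"
  assumes "F holomorphic_on W" and "open W" and "bounded A" and "0 < \<delta>"
    and near: "\<And>z w. z \<in> A \<Longrightarrow> dist w z < \<delta> \<Longrightarrow> w \<in> W"
  shows "\<exists>B. \<forall>z\<in>A. \<forall>w\<in>cball z (\<delta>/2). norm ((deriv ^^ n) F w) \<le> B"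
proof -
  define K where "K = closure (\<Union>z\<in>A. cball z (\<delta>/2))"
  have "K \<subseteq> W"
  proof
    fix x assume "x \<in> K"
    then have "\<exists>y\<in>(\<Union>z\<in>A. cball z (\<delta>/2)). dist y x < \<delta>/2"
      using \<open>0 < \<delta>\<close> unfolding K_def closure_approachable by (meson half_gt_zero)
    then obtain z y where "z \<in> A" "dist z y \<le> \<delta>/2" "dist y x < \<delta>/2"
      by auto
    moreover have "dist x z \<le> dist x y + dist z y"
      by (rule dist_triangle2)
    ultimately show "x \<in> W"
      using near by (simp add: dist_commute)
  qed
  moreover have "compact K"
  proof -
    obtain R where R: "\<And>z. z \<in> A \<Longrightarrow> norm z \<le> R"
      using \<open>bounded A\<close> by (auto simp: bounded_iff)
    have "(\<Union>z\<in>A. cball z (\<delta>/2)) \<subseteq> cball 0 (R + \<delta>/2)"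
    proof clarify
      fix z w assume "z \<in> A" "w \<in> cball z (\<delta>/2)"
      then show "w \<in> cball 0 (R + \<delta>/2)"
        using R[of z] norm_triangle_sub[of w z] by (simp add: dist_norm norm_minus_commute)
    qed
    then show ?thesis
      unfolding K_def using bounded_cball bounded_subset compact_closure by blast
  qed
  moreover have "(deriv ^^ n) F holomorphic_on W"
    using assms(1,2) by (rule holomorphic_higher_deriv)
  ultimately have "bounded ((deriv ^^ n) F ` K)"
    by (intro compact_imp_bounded compact_continuous_image)
       (auto intro: holomorphic_on_imp_continuous_on holomorphic_on_subset)
  then obtain B where "\<And>w. w \<in> K \<Longrightarrow> norm ((deriv ^^ n) F w) \<le> B"
    by (auto simp: bounded_iff)
  then show ?thesis
    by (auto simp: K_def intro!: closure_subset[THEN subsetD])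
qed

lemma uniform_central_difference_bound:
  fixes F :: "complex \<Rightarrow> complex"
  assumes "F holomorphic_on W" and "open W" and "bounded A" and "0 < \<delta>"
    and near: "\<And>z w. z \<in> A \<Longrightarrow> dist w z < \<delta> \<Longrightarrow> w \<in> W"
  shows "\<exists>C. \<forall>z\<in>A. \<forall>h. norm h \<le> \<delta>/2 \<longrightarrow>
           norm (F (z + h) - F (z - h) - 2 * h * deriv F z) \<le> C * norm h ^ 3"
proof -
  have "\<exists>B. \<forall>z\<in>A. \<forall>w\<in>cball z (\<delta>/2). norm ((deriv ^^ 3) F w) \<le> B"
    using assms by (rule holomorphic_higher_deriv_bounded_near)
  then obtain B where
    B: "\<And>z w. z \<in> A \<Longrightarrow> w \<in> cball z (\<delta>/2) \<Longrightarrow> norm ((deriv ^^ 3) F w) \<le> B"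
    by blast
  have "norm (F (z + h) - F (z - h) - 2 * h * deriv F z) \<le> B * norm h ^ 3"
    if "z \<in> A" "norm h \<le> \<delta>/2" for z h
  proof (rule central_difference_bound[OF assms(1,2) convex_cball])
    show "cball z (\<delta>/2) \<subseteq> W"
      using near[OF \<open>z \<in> A\<close>] \<open>0 < \<delta>\<close> by (auto simp: dist_commute)
    show "z + h \<in> cball z (\<delta>/2)" "z - h \<in> cball z (\<delta>/2)"
      using \<open>norm h \<le> \<delta>/2\<close> by (simp_all add: dist_norm)
  qed (use B \<open>z \<in> A\<close> in blast)
  then show ?thesis by blast
qed

lemma symmetric_difference_quotient_error:
  fixes F G :: "complex \<Rightarrow> complex"
  assumes C: "\<And>z h. z \<in> A \<Longrightarrow> norm h \<le> \<delta>/2 \<Longrightarrow>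
      norm (F (z + h) - F (z - h) - 2 * h * deriv F z) \<le> C * norm h ^ 3"
    and deriv: "\<And>z. z \<in> A \<Longrightarrow> deriv F z = - 2 * pi * \<i> * G z"
    and "\<gamma> \<noteq> 0" and "0 < \<delta>"
  shows "\<exists>c>0. \<exists>N0::nat. \<forall>N \<ge> N0. \<forall>z \<in> A.
           cmod (of_nat N / (2 * pi * \<i> * \<gamma>) * F (z - \<gamma> / (2 * of_nat N))
                 - of_nat N / (2 * pi * \<i> * \<gamma>) * F (z + \<gamma> / (2 * of_nat N))
                 - G z) < c / (real N)\<^sup>2"
proof -
  define c where "c = \<bar>C\<bar> * (norm \<gamma>)\<^sup>2 / (16 * pi) + 1"
  show ?thesis
  proof (intro exI[of _ c] exI[of _ "nat \<lceil>norm \<gamma> / \<delta>\<rceil> + 1"] conjI allI impI ballI)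
    fix N :: nat and z assume N: "nat \<lceil>norm \<gamma> / \<delta>\<rceil> + 1 \<le> N" and "z \<in> A"
    define h where "h = \<gamma> / (2 * of_nat N)"
    have "N > 0" and "norm \<gamma> / \<delta> \<le> N"
      using N by linarith+
    then have "norm h \<le> \<delta>/2"
      using \<open>0 < \<delta>\<close> by (simp add: h_def norm_divide field_simps)
    have "of_nat N / (2 * pi * \<i> * \<gamma>) * F (z - h) - of_nat N / (2 * pi * \<i> * \<gamma>) * F (z + h) - G z
        = - (of_nat N / (2 * pi * \<i> * \<gamma>)) * (F (z + h) - F (z - h) - 2 * h * deriv F z)"
      using deriv[OF \<open>z \<in> A\<close>] \<open>\<gamma> \<noteq> 0\<close> \<open>N > 0\<close> by (simp add: h_def field_simps)
    also have "norm \<dots> = N / (2 * pi * norm \<gamma>) * norm (F (z + h) - F (z - h) - 2 * h * deriv F z)"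
      by (simp add: norm_mult norm_divide)
    also have "\<dots> \<le> N / (2 * pi * norm \<gamma>) * (C * norm h ^ 3)"
      using C[OF \<open>z \<in> A\<close> \<open>norm h \<le> \<delta>/2\<close>] by (intro mult_left_mono) auto
    also have "\<dots> = C * (norm \<gamma>)\<^sup>2 / (16 * pi) / (real N)\<^sup>2"
      using \<open>\<gamma> \<noteq> 0\<close> \<open>N > 0\<close>
      by (simp add: h_def norm_divide field_simps power2_eq_square power3_eq_cube)
    also have "\<dots> < c / (real N)\<^sup>2"
    proof -
      have "C * (norm \<gamma>)\<^sup>2 / (16 * pi) \<le> \<bar>C\<bar> * (norm \<gamma>)\<^sup>2 / (16 * pi)"
        by (intro divide_right_mono mult_right_mono) auto
      then show ?thesis
        using \<open>N > 0\<close> by (intro divide_strict_right_mono) (auto simp: c_def)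
    qed
    finally show "cmod (of_nat N / (2 * pi * \<i> * \<gamma>) * F (z - \<gamma> / (2 * of_nat N))
                 - of_nat N / (2 * pi * \<i> * \<gamma>) * F (z + \<gamma> / (2 * of_nat N))
                 - G z) < c / (real N)\<^sup>2"
      by (simp add: h_def)
  qed (simp add: c_def add_nonneg_pos)
qed

lemma bounded_regionZ: "bounded (regionZ \<nu> M)"
proof -
  have "norm z \<le> 2 + \<bar>\<nu>\<bar> + M" if "z \<in> regionZ \<nu> M" for z
    using that cmod_le[of z] by (auto simp: regionZ_def)
  then show ?thesis
    by (auto simp: bounded_iff)
qed

lemma regionZ_thickening_subset_calL_domain:
  assumes z: "z \<in> regionZ \<nu> M" and w: "dist w z < \<nu>"
  shows "w \<in> calL_domain"
proof (cases "Im w = 0")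
  case False
  then show ?thesis by (auto simp: calL_domain_def)
next
  case True
  have "\<bar>Im z\<bar> < \<nu>" "\<bar>Re w - Re z\<bar> < \<nu>"
    using w True abs_Im_le_cmod[of "w - z"] abs_Re_le_cmod[of "w - z"] by (simp_all add: dist_norm)
  moreover have "-1 + \<nu> \<le> Re z" "Re z \<le> 2 - \<nu>" "z \<notin> box_minus \<nu>" "z \<notin> box_plus \<nu>"
    using z by (auto simp: regionZ_def)
  ultimately have "\<nu> < Re z" "Re z < 1 - \<nu>"
    by (auto simp: box_minus_def box_plus_def)
  with \<open>\<bar>Re w - Re z\<bar> < \<nu>\<close> show ?thesis
    by (auto simp: calL_domain_def strip_def)
qed

theorem lemma2p20:
  fixes \<gamma> :: complex and \<nu> M :: real
  assumes "Re \<gamma> > 0" and "Im \<gamma> < 0"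
    and "0 < \<nu>" and "\<nu> < 1/2" and "M > 0"
  shows "\<exists>c>0. \<exists>N0::nat. \<forall>N::nat \<ge> N0. \<forall>z \<in> regionZ \<nu> M.
           cmod (of_nat N / (2 * pi * \<i> * \<gamma>) * calL2 (z - \<gamma> / (2 * of_nat N))
                 - of_nat N / (2 * pi * \<i> * \<gamma>) * calL2 (z + \<gamma> / (2 * of_nat N))
                 - calL1 z) < c / (real N)\<^sup>2"
proof -
  have "\<exists>C. \<forall>z\<in>regionZ \<nu> M. \<forall>h. norm h \<le> \<nu>/2 \<longrightarrow>
      norm (calL2 (z + h) - calL2 (z - h) - 2 * h * deriv calL2 z) \<le> C * norm h ^ 3"
    using holomorphic_on_calL2 open_calL_domain bounded_regionZ \<open>0 < \<nu>\<close>
      regionZ_thickening_subset_calL_domain by (rule uniform_central_difference_bound)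
  then obtain C where "\<And>z h. z \<in> regionZ \<nu> M \<Longrightarrow> norm h \<le> \<nu>/2 \<Longrightarrow>
      norm (calL2 (z + h) - calL2 (z - h) - 2 * h * deriv calL2 z) \<le> C * norm h ^ 3"
    by blast
  moreover have "deriv calL2 z = - 2 * pi * \<i> * calL1 z" if "z \<in> regionZ \<nu> M" for z
    using that \<open>0 < \<nu>\<close> by (intro deriv_calL2 regionZ_thickening_subset_calL_domain) auto
  moreover have "\<gamma> \<noteq> 0"
    using assms(1) by auto
  ultimately show ?thesis
    using \<open>0 < \<nu>\<close> by (rule symmetric_difference_quotient_error)
qed

end
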